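(* Assume (F), fix $\alpha\in\,]0,1[$, and let $0\le u^-<u^+\le V$ with $\hat\rho_{u^+}>\check\rho_{u^-}$. Then $\check\rho_{u^+}<\check\rho_{u^-}<\hat\rho_{u^+}<\hat\rho_{u^-}$ and $$u^+-u^-\ \ge\ \frac{\beta}{2}\,\big(\hat\rho_{u^-}-\hat\rho_{u^+}\big).$$
   Context: Hypothesis (F): $R>0$; $f\in C^2([0,R];[0,+\infty))$ with $f(\rho)=\rho v(\rho)$, $v\in C^2([0,R];[0,+\infty))$; $f(0)=f(R)=0$; there are $B\ge\beta>0$ with $-B\le f''\le-\beta$ on $[0,R]$; $v'(\rho)<0$ for $\rho\in\,]0,R[$. Let $V:=\max_{[0,R]}v=v(0)$. Define $f_\alpha(\rho):=\alpha f(\rho/\alpha)$ for $\rho\in[0,\alpha R]$. For $u\in[0,V]$: $\tilde\rho_u$ is the unique solution of $f_\alpha'(\rho)=u$; $\varphi_u(\rho):=f_\alpha(\tilde\rho_u)+u(\rho-\tilde\rho_u)$ for $\rho\in[0,R]$; $\mathcal I_u:=\{\rho\in[0,R]: f(\rho)=\varphi_u(\rho)\}$, $\check\rho_u:=\min\mathcal I_u$, $\hat\rho_u:=\max\mathcal I_u$. *)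

theory Defs
  imports "HOL-Analysis.Analysis"
begin

definition f_alpha :: "(real \<Rightarrow> real) \<Rightarrow> real \<Rightarrow> real \<Rightarrow> real" where
  "f_alpha f \<alpha> \<rho> = \<alpha> * f (\<rho> / \<alpha>)"

definition rho_tilde :: "(real \<Rightarrow> real) \<Rightarrow> real \<Rightarrow> real \<Rightarrow> real \<Rightarrow> real" where
  "rho_tilde f R \<alpha> u = (THE \<rho>. \<rho> \<in> {0..\<alpha>*R} \<and>
      (f_alpha f \<alpha> has_real_derivative u) (at \<rho> within {0..\<alpha>*R}))"

definition phi :: "(real \<Rightarrow> real) \<Rightarrow> real \<Rightarrow> real \<Rightarrow> real \<Rightarrow> real \<Rightarrow> real" where
  "phi f R \<alpha> u \<rho> = f_alpha f \<alpha> (rho_tilde f R \<alpha> u) + u * (\<rho> - rho_tilde f R \<alpha> u)"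

definition I_set :: "(real \<Rightarrow> real) \<Rightarrow> real \<Rightarrow> real \<Rightarrow> real \<Rightarrow> real set" where
  "I_set f R \<alpha> u = {\<rho> \<in> {0..R}. f \<rho> = phi f R \<alpha> u \<rho>}"

definition rho_check :: "(real \<Rightarrow> real) \<Rightarrow> real \<Rightarrow> real \<Rightarrow> real \<Rightarrow> real" where
  "rho_check f R \<alpha> u = Inf (I_set f R \<alpha> u)"

definition rho_hat :: "(real \<Rightarrow> real) \<Rightarrow> real \<Rightarrow> real \<Rightarrow> real \<Rightarrow> real" where
  "rho_hat f R \<alpha> u = Sup (I_set f R \<alpha> u)"

end

theory Submission
  imports Defs
begin

text \<open>
  Everything follows from strong concavity, \<open>f y \<le> f x + f' x (y - x) - \<beta>/2 (y - x)\<^sup>2\<close>.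
  If \<open>f' s = u\<close>, then \<open>\<phi>\<^sub>u\<close> is the line of slope \<open>u\<close> through \<open>(\<alpha> s, \<alpha> f s)\<close>, and the
  gap \<open>f - \<phi>\<^sub>u\<close> is again \<open>\<beta>\<close>-strongly concave, \<open>\<le> 0\<close> at \<open>0\<close> and \<open>R\<close>, and \<open>\<ge> 0\<close> at \<open>\<alpha> s\<close>.
  Hence it is positive exactly strictly between \<open>rho_check u\<close> and \<open>rho_hat u\<close>, where it is
  at least \<open>\<beta>/2 (x - rho_check u) (rho_hat u - x)\<close>.  The lines \<open>\<phi>\<^sub>u\<^sub>-\<close> and \<open>\<phi>\<^sub>u\<^sub>+\<close> cross at a
  point \<open>p\<close> strictly between their touching points, so the two gaps differ by
  \<open>(u\<^sup>+ - u\<^sup>-) (x - p)\<close>.  Comparing their signs at \<open>rho_check u\<^sup>-\<close>, \<open>p\<close> and \<open>rho_hat u\<^sup>+\<close>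
  gives the ordering; the quadratic lower bound for the \<open>u\<^sup>-\<close>-gap at \<open>rho_hat u\<^sup>+\<close> gives
  the estimate.
\<close>

lemma DERIV_within_closed_interval_unique:
  fixes g :: "real \<Rightarrow> real"
  assumes "a < b" "x \<in> {a..b}"
    and "(g has_real_derivative d1) (at x within {a..b})"
    and "(g has_real_derivative d2) (at x within {a..b})"
  shows "d1 = d2"
  using vector_derivative_unique_within_closed_interval[of a b x g d1 d2] assms
  by (simp add: has_real_derivative_iff_has_vector_derivative)

lemma DERIV_within_nonpos_imp_nonincreasing:
  fixes g g' :: "real \<Rightarrow> real"
  assumes "a \<le> b" "{a..b} \<subseteq> S"
    and deriv: "\<And>x. x \<in> {a..b} \<Longrightarrow> (g has_real_derivative g' x) (at x within S)"
    and nonpos: "\<And>x. x \<in> {a..b} \<Longrightarrow> g' x \<le> 0"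
  shows "g b \<le> g a"
proof -
  have "\<exists>x\<in>{a..b}. g b - g a = g' x * (b - a)"
    using mvt_very_simple[OF \<open>a \<le> b\<close>, of g "\<lambda>x h. g' x * h"]
      has_field_derivative_subset[OF deriv \<open>{a..b} \<subseteq> S\<close>]
    by (simp add: has_field_derivative_def)
  then obtain x where "x \<in> {a..b}" "g b - g a = g' x * (b - a)" by blast
  moreover have "g' x * (b - a) \<le> 0"
    using nonpos[OF \<open>x \<in> {a..b}\<close>] \<open>a \<le> b\<close> by (simp add: mult_nonpos_nonneg)
  ultimately show ?thesis by linarith
qed

lemma tangent_upper_bound_if_deriv_antitone:
  fixes h h' :: "real \<Rightarrow> real"
  assumes deriv: "\<And>x. x \<in> {a..b} \<Longrightarrow> (h has_real_derivative h' x) (at x within {a..b})"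
    and antitone: "\<And>s t. s \<in> {a..b} \<Longrightarrow> t \<in> {a..b} \<Longrightarrow> s \<le> t \<Longrightarrow> h' t \<le> h' s"
    and x: "x \<in> {a..b}" and y: "y \<in> {a..b}"
  shows "h y \<le> h x + h' x * (y - x)"
proof -
  define G where "G z = h z - h' x * z" for z
  have G_deriv: "(G has_real_derivative h' z - h' x) (at z within {a..b})" if "z \<in> {a..b}" for z
    unfolding G_def using deriv[OF that] by (auto intro!: derivative_eq_intros)
  have "G y \<le> G x"
  proof (cases "x \<le> y")
    case True
    show ?thesis
      by (rule DERIV_within_nonpos_imp_nonincreasing[OF True _ G_deriv])
        (use x y antitone in auto)
  next
    case False
    have "- G x \<le> - G y"
    proof (rule DERIV_within_nonpos_imp_nonincreasing[of y x "{a..b}"])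
      fix z assume z: "z \<in> {y..x}"
      then show "((\<lambda>z. - G z) has_real_derivative - (h' z - h' x)) (at z within {a..b})"
        using x y by (intro DERIV_minus G_deriv) auto
      show "- (h' z - h' x) \<le> 0"
        using z x y antitone[of z x] by auto
    qed (use False x y in auto)
    then show ?thesis by simp
  qed
  then show ?thesis
    by (simp add: G_def algebra_simps)
qed

definition strongly_concave_on :: "real \<Rightarrow> real set \<Rightarrow> (real \<Rightarrow> real) \<Rightarrow> (real \<Rightarrow> real) \<Rightarrow> bool"
  where "strongly_concave_on \<beta> S f f' \<longleftrightarrow>
    (\<forall>x\<in>S. \<forall>y\<in>S. f y \<le> f x + f' x * (y - x) - \<beta> / 2 * (y - x)\<^sup>2)"

lemma strongly_concave_onD:
  "strongly_concave_on \<beta> S f f' \<Longrightarrow> x \<in> S \<Longrightarrow> y \<in> S \<Longrightarrow>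
    f y \<le> f x + f' x * (y - x) - \<beta> / 2 * (y - x)\<^sup>2"
  unfolding strongly_concave_on_def by blast

lemma strongly_concave_onI_second_deriv:
  fixes f f' f'' :: "real \<Rightarrow> real"
  assumes f_deriv: "\<And>x. x \<in> {a..b} \<Longrightarrow> (f has_real_derivative f' x) (at x within {a..b})"
    and f'_deriv: "\<And>x. x \<in> {a..b} \<Longrightarrow> (f' has_real_derivative f'' x) (at x within {a..b})"
    and f''_le: "\<And>x. x \<in> {a..b} \<Longrightarrow> f'' x \<le> - \<beta>"
  shows "strongly_concave_on \<beta> {a..b} f f'"
  unfolding strongly_concave_on_def
proof (intro ballI)
  fix x y assume x: "x \<in> {a..b}" and y: "y \<in> {a..b}"
  have "f' t + \<beta> * t \<le> f' s + \<beta> * s" if "s \<in> {a..b}" "t \<in> {a..b}" "s \<le> t" for s t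
  proof (rule DERIV_within_nonpos_imp_nonincreasing[of s t "{a..b}"])
    fix z assume "z \<in> {s..t}"
    then have z: "z \<in> {a..b}" using that by auto
    show "((\<lambda>z. f' z + \<beta> * z) has_real_derivative f'' z + \<beta>) (at z within {a..b})"
      using f'_deriv[OF z] by (auto intro!: derivative_eq_intros)
    show "f'' z + \<beta> \<le> 0" using f''_le[OF z] by simp
  qed (use that in auto)
  \<comment> \<open>\<open>f + \<beta>/2 z\<^sup>2\<close> has antitone derivative, so it lies below its tangents.\<close>
  then have "f y + \<beta> / 2 * y\<^sup>2 \<le> f x + \<beta> / 2 * x\<^sup>2 + (f' x + \<beta> * x) * (y - x)"
  proof (intro tangent_upper_bound_if_deriv_antitone[of a b _ "\<lambda>z. f' z + \<beta> * z", OF _ _ x y])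
    fix z assume "z \<in> {a..b}"
    then show "((\<lambda>z. f z + \<beta> / 2 * z\<^sup>2) has_real_derivative f' z + \<beta> * z) (at z within {a..b})"
      by (auto intro!: derivative_eq_intros f_deriv)
  qed
  then show "f y \<le> f x + f' x * (y - x) - \<beta> / 2 * (y - x)\<^sup>2"
    by (simp add: algebra_simps power2_eq_square)
qed

lemma strongly_concave_on_strict:
  assumes "strongly_concave_on \<beta> S f f'" "0 < \<beta>" "x \<in> S" "y \<in> S" "x \<noteq> y"
  shows "f y < f x + f' x * (y - x)"
proof -
  have "0 < \<beta> / 2 * (y - x)\<^sup>2" using assms(2,5) by simp
  with strongly_concave_onD[OF assms(1,3,4)] show ?thesis by linarith
qed

lemma strongly_concave_on_deriv_inj:
  assumes "strongly_concave_on \<beta> S f f'" "0 < \<beta>"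
  shows "inj_on f' S"
proof (rule inj_onI, rule ccontr)
  fix x y assume "x \<in> S" "y \<in> S" "f' x = f' y" "x \<noteq> y"
  then have "f y < f x + f' x * (y - x)" "f x < f y + f' y * (x - y)"
    using strongly_concave_on_strict[OF assms, of x y] strongly_concave_on_strict[OF assms, of y x]
    by auto
  with \<open>f' x = f' y\<close> show False by (simp add: algebra_simps)
qed

lemma strongly_concave_on_diff_affine:
  assumes "strongly_concave_on \<beta> S f f'"
  shows "strongly_concave_on \<beta> S (\<lambda>x. f x - (c + u * x)) (\<lambda>x. f' x - u)"
  using assms unfolding strongly_concave_on_def by (auto simp: algebra_simps)

lemma strongly_concave_on_between_zeros:
  assumes "strongly_concave_on \<beta> S g g'" "l \<in> S" "r \<in> S" "x \<in> S"
    and "g l = 0" "g r = 0" "l \<le> x" "x \<le> r"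
  shows "\<beta> / 2 * (x - l) * (r - x) \<le> g x"
proof -
  define p q where "p = x - l" and "q = r - x"
  have "0 \<le> p" "0 \<le> q" using assms(7,8) by (simp_all add: p_def q_def)
  have "0 \<le> g x - g' x * p - \<beta> / 2 * p\<^sup>2" "0 \<le> g x + g' x * q - \<beta> / 2 * q\<^sup>2"
    using strongly_concave_onD[OF assms(1,4,2)] strongly_concave_onD[OF assms(1,4,3)] assms(5,6)
    by (simp_all add: p_def q_def algebra_simps power2_eq_square)
  \<comment> \<open>the convex combination with weights \<open>q, p\<close> cancels the derivative term\<close>
  then have "0 \<le> q * (g x - g' x * p - \<beta> / 2 * p\<^sup>2) + p * (g x + g' x * q - \<beta> / 2 * q\<^sup>2)"
    using \<open>0 \<le> p\<close> \<open>0 \<le> q\<close> by simp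
  also have "\<dots> = (p + q) * (g x - \<beta> / 2 * p * q)"
    by (simp add: algebra_simps power2_eq_square)
  finally have "0 \<le> (p + q) * (g x - \<beta> / 2 * p * q)" .
  moreover have "g x = 0" if "p + q = 0"
  proof -
    have "p = 0" using that \<open>0 \<le> p\<close> \<open>0 \<le> q\<close> by simp
    then show ?thesis using assms(5) by (simp add: p_def)
  qed
  ultimately show ?thesis
    using \<open>0 \<le> p\<close> \<open>0 \<le> q\<close> by (cases "p + q = 0") (auto simp: p_def q_def zero_le_mult_iff)
qed

lemma zero_set_bounds_nonneg_set:
  fixes g :: "real \<Rightarrow> real"
  assumes cont: "continuous_on {a..b} g" and "g a \<le> 0" "g b \<le> 0"
    and "m \<in> {a..b}" "0 \<le> g m"
  defines "Z \<equiv> {x \<in> {a..b}. g x = 0}"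
  shows "Inf Z \<in> Z" "Sup Z \<in> Z" "\<And>x. x \<in> {a..b} \<Longrightarrow> 0 \<le> g x \<Longrightarrow> Inf Z \<le> x \<and> x \<le> Sup Z"
proof -
  have bdd: "bdd_below Z" "bdd_above Z"
    unfolding Z_def by (auto intro: bdd_belowI[of _ a] bdd_aboveI[of _ b])
  have left: "\<exists>z\<in>Z. z \<le> x" if x: "x \<in> {a..b}" "0 \<le> g x" for x
  proof -
    have "continuous_on {a..x} g" using x by (intro continuous_on_subset[OF cont]) auto
    then obtain z where "a \<le> z" "z \<le> x" "g z = 0"
      using IVT'[of g a 0 x] \<open>g a \<le> 0\<close> x by auto
    then show ?thesis using x unfolding Z_def by auto
  qed
  have right: "\<exists>z\<in>Z. x \<le> z" if x: "x \<in> {a..b}" "0 \<le> g x" for x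
  proof -
    have "continuous_on {x..b} g" using x by (intro continuous_on_subset[OF cont]) auto
    then obtain z where "x \<le> z" "z \<le> b" "g z = 0"
      using IVT2'[of g b 0 x] \<open>g b \<le> 0\<close> x by auto
    then show ?thesis using x unfolding Z_def by (intro bexI[of _ z]) auto
  qed
  have "Z \<noteq> {}" using left[OF assms(4,5)] by blast
  moreover have "closed Z"
    unfolding Z_def using continuous_closed_preimage_constant[OF cont] by simp
  ultimately show "Inf Z \<in> Z" "Sup Z \<in> Z"
    using closed_contains_Inf[of Z] closed_contains_Sup[of Z] bdd by auto
  show "Inf Z \<le> x \<and> x \<le> Sup Z" if "x \<in> {a..b}" "0 \<le> g x" for x
    using left[OF that] right[OF that] bdd by (meson cInf_lower cSup_upper order_trans)
qed

locale concave_flux =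
  fixes R \<beta> :: real and f f' :: "real \<Rightarrow> real"
  assumes R_pos: "0 < R" and beta_pos: "0 < \<beta>"
    and f_deriv: "\<And>x. x \<in> {0..R} \<Longrightarrow> (f has_real_derivative f' x) (at x within {0..R})"
    and f'_cont: "continuous_on {0..R} f'"
    and concave: "strongly_concave_on \<beta> {0..R} f f'"
    and f_0: "f 0 = 0" and f_R: "f R = 0"
    and f_nonneg: "\<And>x. x \<in> {0..R} \<Longrightarrow> 0 \<le> f x"
begin

lemma deriv_attains:
  assumes "0 \<le> u" "u \<le> f' 0"
  obtains s where "s \<in> {0..R}" "f' s = u"
proof -
  have "f 0 \<le> f R + f' R * (0 - R) - \<beta> / 2 * (0 - R)\<^sup>2"
    using strongly_concave_onD[OF concave, of R 0] R_pos by simp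
  moreover have "0 \<le> \<beta> / 2 * (0 - R)\<^sup>2" using beta_pos by simp
  ultimately have "f' R * R \<le> 0"
    using f_0 f_R by (simp add: algebra_simps)
  then have "f' R \<le> 0"
    using R_pos by (simp add: mult_le_0_iff)
  then show ?thesis
    using IVT2'[of f' R u 0] f'_cont assms R_pos that by auto
qed

lemma SUP_eq_deriv_0:
  assumes f_eq: "\<And>x. x \<in> {0..R} \<Longrightarrow> f x = x * v x"
    and v_deriv: "(v has_real_derivative v0') (at 0 within {0..R})"
  shows "(SUP x\<in>{0..R}. v x) = f' 0"
proof -
  have "(f has_real_derivative v 0) (at 0 within {0..R})"
  proof (rule has_field_derivative_transform_within)
    show "((\<lambda>x. x * v x) has_real_derivative v 0) (at 0 within {0..R})"
      using DERIV_mult[OF DERIV_ident v_deriv] by simp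
  qed (use f_eq R_pos in \<open>auto intro: zero_less_one\<close>)
  then have f'_0: "f' 0 = v 0"
    using DERIV_within_closed_interval_unique[OF R_pos _ f_deriv] R_pos by simp
  have "v x \<le> v 0" if x: "x \<in> {0..R}" "0 < x" for x
  proof -
    have "x * v x \<le> x * v 0 - \<beta> / 2 * x\<^sup>2"
      using strongly_concave_onD[OF concave, of 0 x] x f_eq[OF x(1)] f_0 f'_0
      by (simp add: mult.commute)
    moreover have "0 \<le> \<beta> / 2 * x\<^sup>2" using beta_pos by simp
    ultimately have "x * v x \<le> x * v 0" by linarith
    then show ?thesis using x(2) by simp
  qed
  then have "(SUP x\<in>{0..R}. v x) = v 0"
    using R_pos by (intro cSup_eq_maximum) (auto, metis antisym_conv1 order_refl)
  then show ?thesis using f'_0 by simp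
qed

lemma f_alpha_deriv:
  assumes "0 < \<alpha>" "r \<in> {0..\<alpha> * R}"
  shows "(f_alpha f \<alpha> has_real_derivative f' (r / \<alpha>)) (at r within {0..\<alpha> * R})"
proof -
  have scale: "(\<lambda>r. r / \<alpha>) ` {0..\<alpha> * R} \<subseteq> {0..R}"
    using assms(1) by (auto simp: field_simps)
  then have "r / \<alpha> \<in> {0..R}" using assms(2) by blast
  then have "(f has_real_derivative f' (r / \<alpha>)) (at (r / \<alpha>) within (\<lambda>r. r / \<alpha>) ` {0..\<alpha> * R})"
    using has_field_derivative_subset[OF f_deriv scale] by blast
  moreover have "((\<lambda>r. r / \<alpha>) has_real_derivative 1 / \<alpha>) (at r within {0..\<alpha> * R})"
    using assms(1) by (auto intro!: derivative_eq_intros)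
  ultimately have "(f \<circ> (\<lambda>r. r / \<alpha>) has_real_derivative f' (r / \<alpha>) * (1 / \<alpha>)) (at r within {0..\<alpha> * R})"
    by (rule DERIV_image_chain)
  from DERIV_cmult[OF this, of \<alpha>] show ?thesis
    using assms(1) by (simp add: f_alpha_def[abs_def] o_def)
qed

lemma rho_tilde_eq:
  assumes "0 < \<alpha>" "s \<in> {0..R}"
  shows "rho_tilde f R \<alpha> (f' s) = \<alpha> * s"
  unfolding rho_tilde_def
proof (rule the_equality)
  have "\<alpha> * s \<in> {0..\<alpha> * R}" using assms by auto
  with f_alpha_deriv[OF assms(1)] assms(1)
  show "\<alpha> * s \<in> {0..\<alpha> * R} \<and> (f_alpha f \<alpha> has_real_derivative f' s) (at (\<alpha> * s) within {0..\<alpha> * R})"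
    by force
next
  fix r assume r: "r \<in> {0..\<alpha> * R} \<and> (f_alpha f \<alpha> has_real_derivative f' s) (at r within {0..\<alpha> * R})"
  have "0 < \<alpha> * R" using assms(1) R_pos by simp
  then have "f' (r / \<alpha>) = f' s"
    using DERIV_within_closed_interval_unique f_alpha_deriv[OF assms(1)] r by blast
  moreover have "r / \<alpha> \<in> {0..R}" using r assms(1) by (auto simp: field_simps)
  ultimately have "r / \<alpha> = s"
    using inj_onD[OF strongly_concave_on_deriv_inj[OF concave beta_pos]] assms(2) by blast
  then show "r = \<alpha> * s" using assms(1) by (auto simp: field_simps)
qed

lemma phi_eq:
  assumes "0 < \<alpha>" "s \<in> {0..R}"
  shows "phi f R \<alpha> (f' s) x = \<alpha> * f s + f' s * (x - \<alpha> * s)"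
  using assms by (simp add: phi_def rho_tilde_eq f_alpha_def)

definition gap :: "real \<Rightarrow> real \<Rightarrow> real \<Rightarrow> real"
  where "gap \<alpha> u x = f x - phi f R \<alpha> u x"

lemma I_set_eq_gap_zeros: "I_set f R \<alpha> u = {x \<in> {0..R}. gap \<alpha> u x = 0}"
  by (auto simp: I_set_def gap_def)

lemma gap_strongly_concave: "strongly_concave_on \<beta> {0..R} (gap \<alpha> u) (\<lambda>x. f' x - u)"
proof -
  define c where "c = f_alpha f \<alpha> (rho_tilde f R \<alpha> u) - u * rho_tilde f R \<alpha> u"
  have "gap \<alpha> u = (\<lambda>x. f x - (c + u * x))"
    by (auto simp: gap_def phi_def c_def algebra_simps)
  then show ?thesis using strongly_concave_on_diff_affine[OF concave] by simp
qed

lemma gap_continuous: "continuous_on {0..R} (gap \<alpha> u)"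
  unfolding gap_def phi_def
  by (intro continuous_intros DERIV_continuous_on[OF f_deriv])

lemma gap_signs:
  assumes "\<alpha> \<in> {0<..<1}" "s \<in> {0..R}" "0 \<le> f' s"
  shows "gap \<alpha> (f' s) 0 \<le> 0" "gap \<alpha> (f' s) R \<le> 0"
    and "\<alpha> * s \<in> {0..R}" and "0 \<le> gap \<alpha> (f' s) (\<alpha> * s)"
proof -
  have "\<alpha> * s \<le> s" using assms(1,2) by (intro mult_left_le_one_le) auto
  then show as: "\<alpha> * s \<in> {0..R}" using assms(1,2) by auto
  have R: "0 \<in> {0..R}" using R_pos by simp
  have tangent: "f y \<le> f x + f' x * (y - x)" if "x \<in> {0..R}" "y \<in> {0..R}" for x y
  proof -
    have "0 \<le> \<beta> / 2 * (y - x)\<^sup>2" using beta_pos by simp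
    with strongly_concave_onD[OF concave that] show ?thesis by linarith
  qed
  have "0 \<le> \<alpha> * (f s - f' s * s)"
    using tangent[OF assms(2) R] f_0 assms(1) by simp
  then show "gap \<alpha> (f' s) 0 \<le> 0"
    using assms f_0 by (simp add: gap_def phi_eq algebra_simps)
  have "0 \<le> \<alpha> * f s + f' s * (R - \<alpha> * s)"
    using assms as f_nonneg[OF assms(2)] by simp
  then show "gap \<alpha> (f' s) R \<le> 0"
    using assms f_R by (simp add: gap_def phi_eq)
  \<comment> \<open>\<open>\<alpha> s\<close> is a convex combination of \<open>0\<close> and \<open>s\<close>, and \<open>f 0 = 0\<close>\<close>
  have "(1 - \<alpha>) * f 0 + \<alpha> * f s \<le> (1 - \<alpha>) * (f (\<alpha> * s) + f' (\<alpha> * s) * (0 - \<alpha> * s))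
      + \<alpha> * (f (\<alpha> * s) + f' (\<alpha> * s) * (s - \<alpha> * s))"
    using assms(1) tangent[OF as R] tangent[OF as assms(2)]
    by (intro add_mono mult_left_mono) auto
  then show "0 \<le> gap \<alpha> (f' s) (\<alpha> * s)"
    using assms f_0 by (simp add: gap_def phi_eq algebra_simps)
qed

lemma gap_zero_set:
  assumes "\<alpha> \<in> {0<..<1}" "s \<in> {0..R}" "0 \<le> f' s"
  defines "c \<equiv> rho_check f R \<alpha> (f' s)" and "h \<equiv> rho_hat f R \<alpha> (f' s)"
  shows "c \<in> {0..R}" "gap \<alpha> (f' s) c = 0" "h \<in> {0..R}" "gap \<alpha> (f' s) h = 0"
    and "c \<le> \<alpha> * s" "\<alpha> * s \<le> h"
    and "\<And>x. x \<in> {0..R} \<Longrightarrow> 0 < gap \<alpha> (f' s) x \<Longrightarrow> c < x \<and> x < h"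
    and "\<And>x. c \<le> x \<Longrightarrow> x \<le> h \<Longrightarrow> \<beta> / 2 * (x - c) * (h - x) \<le> gap \<alpha> (f' s) x"
proof -
  note zeros = zero_set_bounds_nonneg_set[OF gap_continuous gap_signs[OF assms(1-3)],
      folded I_set_eq_gap_zeros rho_check_def rho_hat_def, folded c_def h_def]
  show c: "c \<in> {0..R}" "gap \<alpha> (f' s) c = 0" and h: "h \<in> {0..R}" "gap \<alpha> (f' s) h = 0"
    using zeros(1,2) by (auto simp: I_set_eq_gap_zeros)
  show "c \<le> \<alpha> * s" "\<alpha> * s \<le> h"
    using zeros(3) gap_signs[OF assms(1-3)] by auto
  show "c < x \<and> x < h" if "x \<in> {0..R}" "0 < gap \<alpha> (f' s) x" for x
  proof -
    have "x \<noteq> c" "x \<noteq> h" using that(2) c(2) h(2) by auto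
    with zeros(3)[of x] that show ?thesis by auto
  qed
  show "\<beta> / 2 * (x - c) * (h - x) \<le> gap \<alpha> (f' s) x" if "c \<le> x" "x \<le> h" for x
    using strongly_concave_on_between_zeros[OF gap_strongly_concave c(1) h(1) _ c(2) h(2) that]
      that c(1) h(1) by auto
qed

definition crossing :: "real \<Rightarrow> real \<Rightarrow> real \<Rightarrow> real"
  where "crossing \<alpha> s t = \<alpha> * ((f s - f' s * s) - (f t - f' t * t)) / (f' t - f' s)"

lemma gap_crossing:
  assumes "0 < \<alpha>" "s \<in> {0..R}" "t \<in> {0..R}" "f' s \<noteq> f' t"
  shows "gap \<alpha> (f' s) x = gap \<alpha> (f' t) x + (f' t - f' s) * (x - crossing \<alpha> s t)"
  using assms(4) unfolding gap_def phi_eq[OF assms(1,2)] phi_eq[OF assms(1,3)] crossing_def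
  by (simp add: field_simps)

lemma crossing_bounds:
  assumes "0 < \<alpha>" "s \<in> {0..R}" "t \<in> {0..R}" "f' s < f' t"
  shows "\<alpha> * t < crossing \<alpha> s t" "crossing \<alpha> s t < \<alpha> * s"
proof -
  define d p where "d = f' t - f' s" and "p = crossing \<alpha> s t"
  have d: "0 < d" using assms(4) by (simp add: d_def)
  have "s \<noteq> t" using assms(4) by auto
  then have "0 < f s + f' s * (t - s) - f t" "0 < f t + f' t * (s - t) - f s"
    using strongly_concave_on_strict[OF concave beta_pos] assms(2,3) by auto
  moreover have "d * (p - \<alpha> * t) = \<alpha> * (f s + f' s * (t - s) - f t)"
    and "d * (\<alpha> * s - p) = \<alpha> * (f t + f' t * (s - t) - f s)"
    using d by (simp_all add: p_def d_def crossing_def field_simps)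
  ultimately have "0 < d * (p - \<alpha> * t)" "0 < d * (\<alpha> * s - p)"
    using assms(1) by simp_all
  with d show "\<alpha> * t < crossing \<alpha> s t" "crossing \<alpha> s t < \<alpha> * s"
    by (simp_all add: p_def zero_less_mult_iff)
qed

lemma rho_check_lt_crossing:
  assumes \<alpha>: "\<alpha> \<in> {0<..<1}" and s: "s \<in> {0..R}" and t: "t \<in> {0..R}"
    and "0 \<le> f' s" "f' s < f' t"
    and overlap: "rho_check f R \<alpha> (f' s) < rho_hat f R \<alpha> (f' t)"
  shows "rho_check f R \<alpha> (f' s) < crossing \<alpha> s t"
proof (rule ccontr)
  define cs ct ht p where "cs = rho_check f R \<alpha> (f' s)" and "ct = rho_check f R \<alpha> (f' t)"
    and "ht = rho_hat f R \<alpha> (f' t)" and "p = crossing \<alpha> s t"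
  assume "\<not> rho_check f R \<alpha> (f' s) < crossing \<alpha> s t"
  then have "p \<le> cs" by (simp add: cs_def p_def)
  have "0 \<le> f' t" using assms(4,5) by simp
  note T = gap_zero_set[OF \<alpha> t this, folded ct_def ht_def]
  have "0 < \<alpha>" using \<alpha> by simp
  have "ct < cs" using T(5) crossing_bounds(1)[OF \<open>0 < \<alpha>\<close> s t \<open>f' s < f' t\<close>] \<open>p \<le> cs\<close>
    by (simp add: p_def)
  moreover have "cs < ht" using overlap by (simp add: cs_def ht_def)
  ultimately have "0 < \<beta> / 2 * (cs - ct) * (ht - cs)"
    using beta_pos by simp
  also have "\<dots> \<le> gap \<alpha> (f' t) cs" using T(8) \<open>ct < cs\<close> \<open>cs < ht\<close> by simp
  also have "\<dots> \<le> gap \<alpha> (f' s) cs"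
    using gap_crossing[OF _ s t, of \<alpha> cs] \<alpha> \<open>p \<le> cs\<close> \<open>f' s < f' t\<close> by (simp add: p_def)
  also have "\<dots> = 0" using gap_zero_set(2)[OF \<alpha> s \<open>0 \<le> f' s\<close>] by (simp add: cs_def)
  finally show False by simp
qed

lemma rho_interlace:
  assumes \<alpha>: "\<alpha> \<in> {0<..<1}" and s: "s \<in> {0..R}" and t: "t \<in> {0..R}"
    and "0 \<le> f' s" "f' s < f' t"
    and overlap: "rho_check f R \<alpha> (f' s) < rho_hat f R \<alpha> (f' t)"
  shows "rho_check f R \<alpha> (f' t) < rho_check f R \<alpha> (f' s)
      \<and> rho_check f R \<alpha> (f' s) < rho_hat f R \<alpha> (f' t)
      \<and> rho_hat f R \<alpha> (f' t) < rho_hat f R \<alpha> (f' s)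
      \<and> \<beta> / 2 * (rho_hat f R \<alpha> (f' s) - rho_hat f R \<alpha> (f' t)) \<le> f' t - f' s"
proof -
  define cs hs ct ht where "cs = rho_check f R \<alpha> (f' s)" and "hs = rho_hat f R \<alpha> (f' s)"
    and "ct = rho_check f R \<alpha> (f' t)" and "ht = rho_hat f R \<alpha> (f' t)"
  define d p where "d = f' t - f' s" and "p = crossing \<alpha> s t"
  have d: "0 < d" using \<open>f' s < f' t\<close> by (simp add: d_def)
  have gap_s: "gap \<alpha> (f' s) x = gap \<alpha> (f' t) x + d * (x - p)" for x
    using gap_crossing[OF _ s t] \<alpha> \<open>f' s < f' t\<close> by (simp add: d_def p_def)
  have "p < \<alpha> * s" using crossing_bounds(2)[OF _ s t \<open>f' s < f' t\<close>] \<alpha> by (simp add: p_def)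
  have cs_p: "cs < p"
    using rho_check_lt_crossing[OF assms] by (simp add: cs_def p_def)
  have "0 \<le> f' t" using assms(4,5) by simp
  note S = gap_zero_set[OF \<alpha> s \<open>0 \<le> f' s\<close>, folded cs_def hs_def]
  note T = gap_zero_set[OF \<alpha> t \<open>0 \<le> f' t\<close>, folded ct_def ht_def]
  have "cs < ht" using overlap by (simp add: cs_def ht_def)
  have "d * (cs - p) < 0" using cs_p d by (simp add: mult_pos_neg)
  then have "0 < gap \<alpha> (f' t) cs" using gap_s[of cs] S(2) by simp
  then have ct_cs: "ct < cs" using T(7)[OF S(1)] by blast
  have "0 < \<beta> / 2 * (p - cs) * (hs - p)"
    using cs_p \<open>p < \<alpha> * s\<close> S(6) beta_pos by simp
  also have "\<dots> \<le> gap \<alpha> (f' t) p"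
    using S(8)[of p] gap_s[of p] cs_p \<open>p < \<alpha> * s\<close> S(6) by simp
  finally have "p < ht"
    using T(7)[of p] cs_p \<open>p < \<alpha> * s\<close> S(1,3,6) by auto
  then have "0 < gap \<alpha> (f' s) ht" using gap_s[of ht] T(4) d by simp
  then have ht_hs: "ht < hs" using S(7)[OF T(3)] by blast
  have "(ht - cs) * (\<beta> / 2 * (hs - ht)) \<le> gap \<alpha> (f' s) ht"
    using S(8)[of ht] \<open>cs < ht\<close> ht_hs by (simp add: mult.commute mult.left_commute)
  also have "\<dots> = d * (ht - p)" using gap_s[of ht] T(4) by simp
  also have "\<dots> \<le> (ht - cs) * d" using cs_p d by (simp add: mult.commute)
  finally have "\<beta> / 2 * (hs - ht) \<le> d"
    using \<open>cs < ht\<close> by (simp add: mult_le_cancel_left_pos)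
  then show ?thesis
    using ct_cs \<open>cs < ht\<close> ht_hs by (simp add: cs_def hs_def ct_def ht_def d_def)
qed

end

theorem mainTheorem5:
  fixes R \<beta> B \<alpha> u_minus u_plus :: real
    and f f' f'' v v' v'' :: "real \<Rightarrow> real"
  assumes R_pos: "R > 0"
    and f_d1: "\<And>x. x \<in> {0..R} \<Longrightarrow> (f has_real_derivative f' x) (at x within {0..R})"
    and f_d2: "\<And>x. x \<in> {0..R} \<Longrightarrow> (f' has_real_derivative f'' x) (at x within {0..R})"
    and f_C2: "continuous_on {0..R} f''"
    and v_d1: "\<And>x. x \<in> {0..R} \<Longrightarrow> (v has_real_derivative v' x) (at x within {0..R})"
    and v_d2: "\<And>x. x \<in> {0..R} \<Longrightarrow> (v' has_real_derivative v'' x) (at x within {0..R})"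
    and v_C2: "continuous_on {0..R} v''"
    and f_nonneg: "\<And>x. x \<in> {0..R} \<Longrightarrow> f x \<ge> 0"
    and v_nonneg: "\<And>x. x \<in> {0..R} \<Longrightarrow> v x \<ge> 0"
    and f_eq: "\<And>x. x \<in> {0..R} \<Longrightarrow> f x = x * v x"
    and f0: "f 0 = 0" and fR: "f R = 0"
    and beta_pos: "\<beta> > 0" and B_ge: "B \<ge> \<beta>"
    and f''_bounds: "\<And>x. x \<in> {0..R} \<Longrightarrow> - B \<le> f'' x \<and> f'' x \<le> - \<beta>"
    and v'_neg: "\<And>x. x \<in> {0<..<R} \<Longrightarrow> v' x < 0"
    and alpha: "\<alpha> \<in> {0<..<1}"
    and u_bounds: "0 \<le> u_minus" "u_minus < u_plus" "u_plus \<le> (SUP x\<in>{0..R}. v x)"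
    and hyp: "rho_hat f R \<alpha> u_plus > rho_check f R \<alpha> u_minus"
  shows "rho_check f R \<alpha> u_plus < rho_check f R \<alpha> u_minus
       \<and> rho_check f R \<alpha> u_minus < rho_hat f R \<alpha> u_plus
       \<and> rho_hat f R \<alpha> u_plus < rho_hat f R \<alpha> u_minus
       \<and> u_plus - u_minus \<ge> \<beta> / 2 * (rho_hat f R \<alpha> u_minus - rho_hat f R \<alpha> u_plus)"
proof -
  have "strongly_concave_on \<beta> {0..R} f f'"
  proof (rule strongly_concave_onI_second_deriv[OF f_d1 f_d2])
    show "f'' x \<le> - \<beta>" if "x \<in> {0..R}" for x
      using f''_bounds[OF that] by (rule conjunct2)
  qed
  then interpret concave_flux R \<beta> f f'
    using R_pos beta_pos f_d1 DERIV_continuous_on[OF f_d2] f0 fR f_nonneg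
    by unfold_locales
  have V: "(SUP x\<in>{0..R}. v x) = f' 0"
    using SUP_eq_deriv_0[OF f_eq v_d1] R_pos by simp
  have "0 \<le> u_minus" "u_minus \<le> f' 0" "0 \<le> u_plus" "u_plus \<le> f' 0"
    using u_bounds V by linarith+
  obtain s where s: "s \<in> {0..R}" "f' s = u_minus"
    using deriv_attains[OF \<open>0 \<le> u_minus\<close> \<open>u_minus \<le> f' 0\<close>] .
  obtain t where t: "t \<in> {0..R}" "f' t = u_plus"
    using deriv_attains[OF \<open>0 \<le> u_plus\<close> \<open>u_plus \<le> f' 0\<close>] .
  show ?thesis
    using rho_interlace[OF alpha s(1) t(1), unfolded s(2) t(2), OF u_bounds(1,2) hyp] .
qed

end
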